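(* Let $\mathbb S$ be the Sorgenfrey line (the reals with topology generated by intervals $[a,b)$). Then every function from $\mathbb S$ to a metric space is weakly separated, and the function $\chi_{\mathbb Q}\colon\mathbb S\to\mathbb R$ is weakly separated but not Borel 1.
   Context: For a topological space $X$ and metric space $(Y,d)$, a neighborhood assignment is a family $\{V_x\}_{x\in X}$ of open subsets of $X$ with $x\in V_x$. $f\colon X\to Y$ is weakly separated if for every $\varepsilon>0$ there is a neighborhood assignment $\{V_x\}_{x\in X}$ such that for all $x,y\in X$, $(x,y)\in V_y\times V_x$ implies $d(f(x),f(y))<\varepsilon$; Borel 1 if $f^{-1}(V)$ is $F_\sigma$ in $X$ for every open $V\subseteq Y$. $\chi_{\mathbb Q}$ is the characteristic function of the rationals. *)

theory Defs
  imports "HOL-Analysis.Analysis"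
begin

definition Sorgenfrey :: "real topology" where
  "Sorgenfrey = topology_generated_by {{a..<b} | a b. a < b}"

definition nbhd_assignment :: "'a topology \<Rightarrow> ('a \<Rightarrow> 'a set) \<Rightarrow> bool" where
  "nbhd_assignment X V \<longleftrightarrow> (\<forall>x\<in>topspace X. openin X (V x) \<and> x \<in> V x)"

definition weakly_separated :: "'a topology \<Rightarrow> ('a \<Rightarrow> 'b::metric_space) \<Rightarrow> bool" where
  "weakly_separated X f \<longleftrightarrow>
     (\<forall>\<epsilon>>0. \<exists>V. nbhd_assignment X V \<and>
        (\<forall>x\<in>topspace X. \<forall>y\<in>topspace X. x \<in> V y \<and> y \<in> V x \<longrightarrow> dist (f x) (f y) < \<epsilon>))"

definition borel1 :: "'a topology \<Rightarrow> ('a \<Rightarrow> 'b::metric_space) \<Rightarrow> bool" where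
  "borel1 X f \<longleftrightarrow> (\<forall>V. open V \<longrightarrow> fsigma_in X {x \<in> topspace X. f x \<in> V})"

end

(*
  With the neighbourhood assignment x \<mapsto> [x, x + 1), two points lying in each other's
  neighbourhood coincide, so every function on the Sorgenfrey line is weakly separated.

  The Sorgenfrey line is a Baire space: if the closed sets F n contain no interval [c, d),
  closed intervals chosen nested and with the (n+1)-st missing F n meet in a point outside
  every F n. Were the irrationals a countable union of Sorgenfrey-closed sets, these together
  with the rational singletons would be a countable closed cover of the line none of whose
  members contains an interval, as the rationals are dense. So the preimage of (-\<infinity>, 1/2)
  under the indicator of the rationals is not F-sigma.
*)
theory Submission
  imports Defs
begin

lemma openin_Sorgenfrey_atLeastLessThan: "openin Sorgenfrey {a..<b}"
proof (cases "a < b")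
  case True
  then have "{a..<b} \<in> {{a..<b} | a b. a < b}"
    by blast
  then show ?thesis
    unfolding Sorgenfrey_def by (rule topology_generated_by_Basis)
qed simp

lemma openin_Sorgenfrey:
  "openin Sorgenfrey U \<longleftrightarrow> (\<forall>x\<in>U. \<exists>d>0. {x..<x+d} \<subseteq> U)"
proof
  assume "openin Sorgenfrey U"
  then have "generate_topology_on {{a..<b} | a b::real. a < b} U"
    unfolding Sorgenfrey_def openin_topology_generated_by_iff .
  then show "\<forall>x\<in>U. \<exists>d>0. {x..<x+d} \<subseteq> U"
  proof (induction rule: generate_topology_on.induct)
    case (Int A B)
    show ?case
    proof
      fix x assume "x \<in> A \<inter> B"
      then obtain d1 d2 where "d1 > 0" "{x..<x+d1} \<subseteq> A" "d2 > 0" "{x..<x+d2} \<subseteq> B"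
        using Int.IH by blast
      moreover have "{x..<x + min d1 d2} \<subseteq> {x..<x+d1} \<inter> {x..<x+d2}"
        by auto
      ultimately have "{x..<x + min d1 d2} \<subseteq> A \<inter> B"
        by (meson Int_mono subset_trans)
      moreover have "min d1 d2 > 0"
        using \<open>d1 > 0\<close> \<open>d2 > 0\<close> by simp
      ultimately show "\<exists>d>0. {x..<x+d} \<subseteq> A \<inter> B"
        by blast
    qed
  next
    case (UN K)
    show ?case
    proof
      fix x assume "x \<in> \<Union>K"
      then obtain A where "A \<in> K" "x \<in> A"
        by blast
      then show "\<exists>d>0. {x..<x+d} \<subseteq> \<Union>K"
        using UN.IH by blast
    qed
  next
    case (Basis S)
    then obtain a b where "S = {a..<b}"
      by blast
    then show ?case
      by (auto intro!: exI[of _ "b - x" for x])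
  qed simp
next
  assume intervals: "\<forall>x\<in>U. \<exists>d>0. {x..<x+d} \<subseteq> U"
  show "openin Sorgenfrey U"
  proof (subst openin_subopen, intro ballI)
    fix x assume "x \<in> U"
    then obtain d where "d > 0" "{x..<x+d} \<subseteq> U"
      using intervals by blast
    then show "\<exists>T. openin Sorgenfrey T \<and> x \<in> T \<and> T \<subseteq> U"
      by (intro exI[of _ "{x..<x+d}"] conjI openin_Sorgenfrey_atLeastLessThan) simp_all
  qed
qed

lemma topspace_Sorgenfrey [simp]: "topspace Sorgenfrey = UNIV"
proof -
  have "x \<in> topspace Sorgenfrey" for x :: real
    using openin_subset[OF openin_Sorgenfrey_atLeastLessThan[of x "x + 1"]] by auto
  then show ?thesis
    by auto
qed

lemma closedin_Sorgenfrey_singleton: "closedin Sorgenfrey {q}"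
proof -
  have "\<exists>d>0. {x..<x+d} \<subseteq> - {q}" if "x \<noteq> q" for x
  proof (cases "x < q")
    case True
    then show ?thesis
      by (intro exI[of _ "q - x"]) auto
  next
    case False
    then show ?thesis
      using that by (intro exI[of _ 1]) auto
  qed
  then show ?thesis
    by (simp add: closedin_def openin_Sorgenfrey Compl_eq_Diff_UNIV[symmetric])
qed

lemma weakly_separated_Sorgenfrey: "weakly_separated Sorgenfrey f"
  unfolding weakly_separated_def nbhd_assignment_def
  by (intro allI impI exI[of _ "\<lambda>x. {x..<x+1}"]) (auto simp: openin_Sorgenfrey_atLeastLessThan)

lemma Sorgenfrey_closed_misses_subinterval:
  assumes "closedin Sorgenfrey F" "\<And>c d. c < d \<Longrightarrow> \<not> {c..<d} \<subseteq> F" "a < b"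
  obtains c d where "c < d" "{c..d} \<subseteq> {a..b}" "{c..d} \<inter> F = {}"
proof -
  obtain p where p: "a \<le> p" "p < b" "p \<notin> F"
    using assms(2)[OF assms(3)] by (auto simp: subset_eq)
  have "openin Sorgenfrey (- F)"
    using assms(1) by (simp add: closedin_def Compl_eq_Diff_UNIV)
  then obtain \<delta> where "\<delta> > 0" and \<delta>: "{p..<p+\<delta>} \<inter> F = {}"
    using p(3) unfolding openin_Sorgenfrey by blast
  define e where "e = min \<delta> (b - p) / 2"
  have "0 < e" "e < \<delta>" "e < b - p"
    using \<open>\<delta> > 0\<close> p(2) by (auto simp: e_def)
  then have "{p..p+e} \<subseteq> {a..b}" "{p..p+e} \<subseteq> {p..<p+\<delta>}"
    using p(1) by auto
  then show ?thesis
    using \<open>0 < e\<close> \<delta> by (intro that[of p "p + e"]) auto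
qed

lemma Sorgenfrey_Baire:
  fixes F :: "nat \<Rightarrow> real set"
  assumes "\<And>n. closedin Sorgenfrey (F n)" "\<And>n c d. c < d \<Longrightarrow> \<not> {c..<d} \<subseteq> F n"
  shows "\<exists>x. \<forall>n. x \<notin> F n"
proof -
  have "\<exists>I. \<forall>n. fst (I n) < snd (I n) \<and>
      {fst (I (Suc n))..snd (I (Suc n))} \<subseteq> {fst (I n)..snd (I n)} \<and>
      {fst (I (Suc n))..snd (I (Suc n))} \<inter> F n = {}"
  proof (rule dependent_nat_choice)
    fix J :: "real \<times> real" and n assume "fst J < snd J"
    then obtain c d where "c < d" "{c..d} \<subseteq> {fst J..snd J}" "{c..d} \<inter> F n = {}"
      using Sorgenfrey_closed_misses_subinterval[OF assms] by metis
    then show "\<exists>J'. fst J' < snd J' \<and> {fst J'..snd J'} \<subseteq> {fst J..snd J} \<and> {fst J'..snd J'} \<inter> F n = {}"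
      by (intro exI[of _ "(c, d)"]) auto
  qed (auto intro: exI[of _ "(0, 1)"])
  then obtain I :: "nat \<Rightarrow> real \<times> real" where I:
    "\<And>n. fst (I n) < snd (I n)"
    "\<And>n. {fst (I (Suc n))..snd (I (Suc n))} \<subseteq> {fst (I n)..snd (I n)}"
    "\<And>n. {fst (I (Suc n))..snd (I (Suc n))} \<inter> F n = {}"
    by blast
  define S where "S n = {fst (I (Suc n))..snd (I (Suc n))}" for n
  have "\<exists>x. \<forall>n. x \<in> S n"
  proof (rule bounded_closed_nest)
    show "S n \<subseteq> S m" if "m \<le> n" for m n
      using lift_Suc_antimono_le[of S, OF _ that] I(2) unfolding S_def by blast
  qed (use I(1) in \<open>auto simp: S_def less_imp_le\<close>)
  then show ?thesis
    using I(3) unfolding S_def by blast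
qed

lemma Sorgenfrey_countable_closed_cover_contains_interval:
  assumes "countable \<A>" "\<And>A. A \<in> \<A> \<Longrightarrow> closedin Sorgenfrey A" "\<Union>\<A> = UNIV"
  shows "\<exists>A\<in>\<A>. \<exists>c d. c < d \<and> {c..<d} \<subseteq> A"
proof (rule ccontr)
  assume no_interval: "\<not> ?thesis"
  have "\<A> \<noteq> {}"
    using assms(3) by auto
  then have F: "from_nat_into \<A> n \<in> \<A>" for n
    by (rule from_nat_into)
  obtain x where "\<forall>n. x \<notin> from_nat_into \<A> n"
    using Sorgenfrey_Baire[of "from_nat_into \<A>"] assms(2) F no_interval by meson
  moreover have "x \<in> from_nat_into \<A> (to_nat_on \<A> A)" if "A \<in> \<A>" "x \<in> A" for A
    using that assms(1) by (simp add: from_nat_into_to_nat_on)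
  ultimately show False
    using assms(3) by blast
qed

lemma not_fsigma_in_Sorgenfrey_irrationals: "\<not> fsigma_in Sorgenfrey (- \<rat>)"
proof
  assume "fsigma_in Sorgenfrey (- \<rat>)"
  then obtain \<C> where \<C>: "countable \<C>" "\<And>C. C \<in> \<C> \<Longrightarrow> closedin Sorgenfrey C" "\<Union>\<C> = - \<rat>"
    unfolding fsigma_in_def union_of_def by blast
  define \<A> where "\<A> = \<C> \<union> (\<lambda>r. {r}) ` \<rat>"
  have "countable \<A>"
    by (simp add: \<A>_def \<C>(1) countable_rat)
  moreover have "\<And>A. A \<in> \<A> \<Longrightarrow> closedin Sorgenfrey A"
    using \<C>(2) closedin_Sorgenfrey_singleton by (auto simp: \<A>_def)
  moreover have "\<Union>\<A> = UNIV"
    using \<C>(3) by (auto simp: \<A>_def)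
  ultimately obtain A c d where A: "A \<in> \<A>" "c < d" "{c..<d} \<subseteq> A"
    using Sorgenfrey_countable_closed_cover_contains_interval by meson
  obtain r where r: "r \<in> \<rat>" "c < r" "r < d"
    using Rats_dense_in_real[OF \<open>c < d\<close>] by blast
  have "c \<in> A" "r \<in> A"
    using A(2,3) r(2,3) by auto
  show False
  proof (cases "A \<in> \<C>")
    case True
    then have "r \<in> \<Union>\<C>"
      using \<open>r \<in> A\<close> by blast
    then show False
      using \<C>(3) r(1) by simp
  next
    case False
    then obtain s where "A = {s}"
      using A(1) unfolding \<A>_def by blast
    then show False
      using \<open>c \<in> A\<close> \<open>r \<in> A\<close> r(2) by simp
  qed
qed

lemma not_borel1_Sorgenfrey_indicator_Rats:
  "\<not> borel1 Sorgenfrey (indicator \<rat> :: real \<Rightarrow> real)"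
proof
  assume "borel1 Sorgenfrey (indicator \<rat> :: real \<Rightarrow> real)"
  then have "fsigma_in Sorgenfrey {x \<in> topspace Sorgenfrey. (indicator \<rat> x :: real) \<in> {..<1/2}}"
    unfolding borel1_def using open_lessThan by blast
  moreover have "{x \<in> topspace Sorgenfrey. (indicator \<rat> x :: real) \<in> {..<1/2}} = - \<rat>"
    by (auto simp: indicator_def)
  ultimately show False
    using not_fsigma_in_Sorgenfrey_irrationals by simp
qed

theorem mainTheorem6:
  shows "(\<forall>f :: real \<Rightarrow> 'b::metric_space. weakly_separated Sorgenfrey f)
     \<and> weakly_separated Sorgenfrey (indicator \<rat> :: real \<Rightarrow> real)
     \<and> \<not> borel1 Sorgenfrey (indicator \<rat> :: real \<Rightarrow> real)"
  by (intro conjI allI weakly_separated_Sorgenfrey not_borel1_Sorgenfrey_indicator_Rats)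

end
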